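(* Let $T:X\to Y$ be a bijective linear operator between Archimedean vector lattices, and assume that $X$ has sufficiently many components. Then $T$ is disjointness preserving if and only if $T^{-1}$ satisfies condition $(\beta)$.
   Context: All vector lattices are Archimedean. For a subset $A$ of a vector lattice $X$, $A^d=\{x\in X: |x|\wedge|a|=0 \text{ for all } a\in A\}$ and $A^{dd}=(A^d)^d$. For $a,b\in X$ we write $a\lhd b$ if $\{a\}^{dd}\subseteq\{b\}^{dd}$. A linear operator $S$ satisfies condition $(\beta)$ if $Sa\lhd Sb$ whenever $a\lhd b$. A linear operator is disjointness preserving if it maps disjoint elements to disjoint elements. An element $x'$ is a component of $x$ if $|x'|\wedge|x-x'|=0$. A vector lattice $X$ has sufficiently many components if whenever $x,u\in X$ with $x\notin\{u\}^{dd}$, there exists a nonzero component $x'$ of $x$ with $|x'|\wedge|u|=0$. *)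

theory Defs
  imports Main "HOL.Real_Vector_Spaces"
begin

text \<open>A (real) vector lattice is modelled as a type of class
  ordered_real_vector that is also a lattice (same order).\<close>

definition vabs :: "'a::{ordered_real_vector, lattice} \<Rightarrow> 'a" where
  "vabs x = sup x (- x)"

definition archimedean_vl :: "'a::{ordered_real_vector, lattice} itself \<Rightarrow> bool" where
  "archimedean_vl _ \<longleftrightarrow>
     (\<forall>x y :: 'a. 0 \<le> x \<and> (\<forall>n::nat. real n *\<^sub>R x \<le> y) \<longrightarrow> x = 0)"

definition vdisj :: "'a::{ordered_real_vector, lattice} \<Rightarrow> 'a \<Rightarrow> bool" where
  "vdisj x y \<longleftrightarrow> inf (vabs x) (vabs y) = 0"

definition dcompl :: "'a::{ordered_real_vector, lattice} set \<Rightarrow> 'a set" where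
  "dcompl A = {x. \<forall>a\<in>A. vdisj x a}"

definition ddband :: "'a::{ordered_real_vector, lattice} \<Rightarrow> 'a set" where
  "ddband a = dcompl (dcompl {a})"

definition vlhd :: "'a::{ordered_real_vector, lattice} \<Rightarrow> 'a \<Rightarrow> bool" where
  "vlhd a b \<longleftrightarrow> ddband a \<subseteq> ddband b"

definition cond_beta ::
  "('a::{ordered_real_vector, lattice} \<Rightarrow> 'b::{ordered_real_vector, lattice}) \<Rightarrow> bool" where
  "cond_beta S \<longleftrightarrow> (\<forall>a b. vlhd a b \<longrightarrow> vlhd (S a) (S b))"

definition disj_preserving ::
  "('a::{ordered_real_vector, lattice} \<Rightarrow> 'b::{ordered_real_vector, lattice}) \<Rightarrow> bool" where
  "disj_preserving T \<longleftrightarrow> (\<forall>x y. vdisj x y \<longrightarrow> vdisj (T x) (T y))"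

definition vcomponent :: "'a::{ordered_real_vector, lattice} \<Rightarrow> 'a \<Rightarrow> bool" where
  "vcomponent x' x \<longleftrightarrow> vdisj x' (x - x')"

definition suff_many_components :: "'a::{ordered_real_vector, lattice} itself \<Rightarrow> bool" where
  "suff_many_components _ \<longleftrightarrow>
     (\<forall>x u :: 'a. x \<notin> ddband u \<longrightarrow>
        (\<exists>x'. vcomponent x' x \<and> x' \<noteq> 0 \<and> vdisj x' u))"

end

theory Submission
  imports Defs "HOL-Library.Lattice_Algebras"
begin

text \<open>
  (\<Rightarrow>) Let \<open>x = T\<inverse> a\<close> and \<open>u = T\<inverse> b\<close> with \<open>a \<lhd> b\<close>. If \<open>x\<close> were not in the band
  generated by \<open>u\<close>, it would have a nonzero component \<open>x'\<close> disjoint from \<open>u\<close>. Then \<open>T x'\<close> is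
  disjoint from \<open>b\<close>, hence from \<open>a\<close>, and also from \<open>T (x - x') = a - T x'\<close>; an element disjoint
  from both \<open>a - T x'\<close> and \<open>a\<close> is zero, so \<open>x' = 0\<close>.

  (\<Leftarrow>) For disjoint \<open>x, y\<close> the element \<open>w = \<bar>T x\<bar> \<sqinter> \<bar>T y\<bar>\<close> satisfies \<open>w \<lhd> T x\<close> and
  \<open>w \<lhd> T y\<close>, so by \<open>(\<beta>)\<close> \<open>T\<inverse> w\<close> lies in the bands generated by \<open>x\<close> and by \<open>y\<close>. These bands
  meet only in \<open>0\<close>, hence \<open>w = 0\<close>.
\<close>

interpretation vector_lattice:
  lattice_ab_group_add_abs vabs "(+)" "0::'a::{ordered_real_vector, lattice}" "(-)" uminus
    "(\<le>)" "(<)" inf sup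
  by unfold_locales (simp add: vabs_def)

lemma inf_add_le_add_inf:
  fixes a u v :: "'a::{ordered_real_vector, lattice}"
  assumes "0 \<le> a" "0 \<le> u" "0 \<le> v"
  shows "inf a (u + v) \<le> inf a u + inf a v"
proof -
  define t where "t = inf a (u + v)"
  have "0 \<le> t" "t \<le> a" using assms by (simp_all add: t_def)
  have "t \<le> inf (v + t) (v + u)"
    using assms by (simp add: t_def add.commute le_infI2)
  then have "t \<le> v + inf t u"
    by (simp only: vector_lattice.add_inf_distrib_left)
  then have "t - inf t u \<le> v"
    by (simp only: diff_le_eq add.commute)
  moreover have "t - inf t u \<le> a"
    using \<open>0 \<le> t\<close> \<open>t \<le> a\<close> assms(2) by (simp add: order_trans[of _ t])
  ultimately have "t - inf t u \<le> inf a v"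
    by (rule le_infI[rotated])
  then have "t \<le> inf t u + inf a v"
    by (simp only: diff_le_eq add.commute)
  also have "\<dots> \<le> inf a u + inf a v"
    using \<open>t \<le> a\<close> by (simp add: add_right_mono le_infI1)
  finally show ?thesis by (simp add: t_def)
qed

lemma vdisj_commute: "vdisj x y \<longleftrightarrow> vdisj y x"
  unfolding vdisj_def by (simp add: inf_commute)

lemma vdisj_self_iff: "vdisj x x \<longleftrightarrow> x = 0"
  unfolding vdisj_def by simp

lemma vdisj_add_imp_zero:
  fixes p q :: "'a::{ordered_real_vector, lattice}"
  assumes "vdisj p q" "vdisj p (p + q)"
  shows "p = 0"
proof -
  have "vabs p \<le> vabs (p + q) + vabs q"
    using vector_lattice.abs_triangle_ineq[of "p + q" "- q"] by simp
  then have "vabs p = inf (vabs p) (vabs (p + q) + vabs q)"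
    by (simp add: inf_absorb1)
  also have "\<dots> \<le> inf (vabs p) (vabs (p + q)) + inf (vabs p) (vabs q)"
    by (simp add: inf_add_le_add_inf)
  also have "\<dots> = 0"
    using assms by (simp add: vdisj_def)
  finally show ?thesis
    by (simp add: order.antisym)
qed

lemma dcompl_antimono: "A \<subseteq> B \<Longrightarrow> dcompl B \<subseteq> dcompl A"
  unfolding dcompl_def by auto

lemma in_ddband_self: "a \<in> ddband a"
  unfolding ddband_def dcompl_def by (auto simp: vdisj_commute)

lemma vlhd_iff_in_ddband: "vlhd x u \<longleftrightarrow> x \<in> ddband u"
proof
  assume "x \<in> ddband u"
  then have "dcompl {u} \<subseteq> dcompl {x}"
    unfolding ddband_def dcompl_def by (auto simp: vdisj_commute)
  then show "vlhd x u"
    unfolding vlhd_def ddband_def by (rule dcompl_antimono)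
qed (use in_ddband_self vlhd_def in blast)

lemma vlhd_of_vabs_le:
  fixes w a :: "'a::{ordered_real_vector, lattice}"
  assumes "vabs w \<le> vabs a"
  shows "vlhd w a"
proof -
  have "dcompl {a} \<subseteq> dcompl {w}"
  proof
    fix v assume "v \<in> dcompl {a}"
    then have "inf (vabs v) (vabs a) = 0"
      by (simp add: dcompl_def vdisj_def)
    moreover have "inf (vabs v) (vabs w) \<le> inf (vabs v) (vabs a)"
      using assms by (simp add: le_infI2)
    ultimately have "inf (vabs v) (vabs w) = 0"
      by (simp add: order.antisym)
    then show "v \<in> dcompl {w}"
      by (simp add: dcompl_def vdisj_def)
  qed
  then show ?thesis
    unfolding vlhd_def ddband_def by (rule dcompl_antimono)
qed

lemma vlhd_vdisj_imp_zero:
  fixes z x y :: "'a::{ordered_real_vector, lattice}"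
  assumes "vlhd z x" "vlhd z y" "vdisj x y"
  shows "z = 0"
proof -
  have "y \<in> dcompl {x}"
    using assms(3) by (simp add: dcompl_def vdisj_commute)
  then have "z \<in> dcompl {y}"
    using assms(1) unfolding vlhd_iff_in_ddband ddband_def dcompl_def by blast
  then have "vdisj z z"
    using assms(2) unfolding vlhd_iff_in_ddband ddband_def dcompl_def by blast
  then show ?thesis
    by (simp add: vdisj_self_iff)
qed

lemma disj_preserving_imp_cond_beta_inv:
  fixes T :: "'a::{ordered_real_vector, lattice} \<Rightarrow> 'b::{ordered_real_vector, lattice}"
  assumes "additive T" "bij T" "suff_many_components TYPE('a)" "disj_preserving T"
  shows "cond_beta (inv T)"
  unfolding cond_beta_def
proof (intro allI impI)
  fix a b :: 'b
  assume "vlhd a b"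
  have T_inv: "T (inv T y) = y" for y
    using assms(2) by (simp add: bij_is_surj surj_f_inv_f)
  have "inv T a \<in> ddband (inv T b)"
  proof (rule ccontr)
    assume "inv T a \<notin> ddband (inv T b)"
    then obtain x' where comp: "vcomponent x' (inv T a)" and "x' \<noteq> 0"
      and "vdisj x' (inv T b)"
      using assms(3) unfolding suff_many_components_def by blast
    have "vdisj (T x') (T (inv T b))"
      using \<open>vdisj x' (inv T b)\<close> assms(4) unfolding disj_preserving_def by blast
    then have "vdisj (T x') b"
      by (simp add: T_inv)
    then have "vdisj (T x') a"
      using \<open>vlhd a b\<close> unfolding vlhd_iff_in_ddband ddband_def dcompl_def
      by (auto simp: vdisj_commute)
    moreover have "T x' + T (inv T a - x') = a"
      using additive.add[OF assms(1), of x' "inv T a - x'"] by (simp add: T_inv)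
    ultimately have "vdisj (T x') (T x' + T (inv T a - x'))"
      by simp
    moreover have "vdisj (T x') (T (inv T a - x'))"
      using comp assms(4) unfolding disj_preserving_def vcomponent_def by blast
    ultimately have "T x' = T 0"
      using vdisj_add_imp_zero additive.zero[OF assms(1)] by metis
    then show False
      using \<open>x' \<noteq> 0\<close> assms(2) by (simp add: bij_is_inj inj_eq)
  qed
  then show "vlhd (inv T a) (inv T b)"
    by (simp add: vlhd_iff_in_ddband)
qed

lemma cond_beta_inv_imp_disj_preserving:
  fixes T :: "'a::{ordered_real_vector, lattice} \<Rightarrow> 'b::{ordered_real_vector, lattice}"
  assumes "bij T" "T 0 = 0" "cond_beta (inv T)"
  shows "disj_preserving T"
  unfolding disj_preserving_def
proof (intro allI impI)
  fix x y :: 'a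
  assume "vdisj x y"
  define w where "w = inf (vabs (T x)) (vabs (T y))"
  have "vabs w \<le> vabs (T x)" "vabs w \<le> vabs (T y)"
    by (simp_all add: w_def)
  then have "vlhd w (T x)" "vlhd w (T y)"
    by (simp_all add: vlhd_of_vabs_le)
  then have "vlhd (inv T w) x" "vlhd (inv T w) y"
    using assms(1,3) unfolding cond_beta_def by (metis bij_is_inj inv_f_f)+
  then have "inv T w = 0"
    using \<open>vdisj x y\<close> by (rule vlhd_vdisj_imp_zero)
  then have "w = 0"
    using assms(1,2) by (metis bij_inv_eq_iff)
  then show "vdisj (T x) (T y)"
    by (simp add: vdisj_def w_def)
qed

theorem theorem3p4:
  fixes T :: "'a::{ordered_real_vector, lattice} \<Rightarrow> 'b::{ordered_real_vector, lattice}"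
  assumes "archimedean_vl TYPE('a)" and "archimedean_vl TYPE('b)"
    and "linear T" and "bij T"
    and "suff_many_components TYPE('a)"
  shows "disj_preserving T \<longleftrightarrow> cond_beta (inv T)"
proof
  have "additive T"
    using assms(3) by (simp add: additive.intro linear_add)
  then show "disj_preserving T \<Longrightarrow> cond_beta (inv T)"
    using assms(4,5) by (rule disj_preserving_imp_cond_beta_inv)
next
  show "cond_beta (inv T) \<Longrightarrow> disj_preserving T"
    using assms(4) linear_0[OF assms(3)] by (rule cond_beta_inv_imp_disj_preserving)
qed

end
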